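(* Let $k,\ell\ge 2$, $n\ge 1$, and let the multisets $e_1,\dots,e_{m}\subseteq\mathbb{Z}_n$ (each of size $k$) be arbitrary. Then the hypergraph $W_n$ determined by $e_1,\dots,e_m$ is orientable if and only if the weighted hypergraph $\hat W_n$ determined by $e_1,\dots,e_m$ is orientable. (In particular, for the random models, the events $\{W_n\text{ is orientable}\}$ and $\{\hat W_n\text{ is orientable}\}$ coincide.)
   Context: $\mathbb{Z}_n=\{0,\dots,n-1\}$ with arithmetic mod $n$; $[j,j+\ell)=\{j,\dots,j+\ell-1\}$ mod $n$. In the random model, $m=cn$ and each $e_i$ consists of $k$ independent uniform elements of $\mathbb{Z}_n$. A weighted hypergraph $H=(V,E,\eta)$ has weights $\eta:V\cup E\to\mathbb{N}$; an orientation assigns to each pair $(e,v)$ with $v\in e$ a number $\mu(e,v)\in\mathbb{N}_0$ such that $\sum_{v\in e}\mu(e,v)=\eta(e)$ for every $e\in E$ and $\sum_{e\ni v}\mu(e,v)\le\eta(v)$ for every $v\in V$; $H$ is orientable if an orientation exists. $W_n$: vertex set $\mathbb{Z}_n$, hyperedges $e'_i=\bigcup_{j\in e_i}[j,j+\ell)$ for $i=1,\dots,m$, all weights equal to $1$. $\hat W_n$: vertex set $\mathbb{Z}_n$ with $\eta(w)=\ell$ for every vertex $w$; "ordinary" edges $e_1,\dots,e_m$ with weight $1$; and "helper" edges $c_i=\{i,i+1\}$ for $i\in\mathbb{Z}_n$ with weight $\ell-1$. *)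

theory Defs
  imports Main "HOL-Library.Multiset"
begin

text \<open>Weighted hypergraph with vertex set V, vertex weights wv, edges indexed by a
finite index set I, edge E i (a set of vertices), edge weights we.\<close>

definition orientable ::
  "'v set \<Rightarrow> ('v \<Rightarrow> nat) \<Rightarrow> 'i set \<Rightarrow> ('i \<Rightarrow> 'v set) \<Rightarrow> ('i \<Rightarrow> nat) \<Rightarrow> bool" where
  "orientable V wv I E we \<longleftrightarrow>
     (\<exists>mu :: 'i \<Rightarrow> 'v \<Rightarrow> nat.
        (\<forall>i\<in>I. (\<Sum>v\<in>E i. mu i v) = we i) \<and>
        (\<forall>v\<in>V. (\<Sum>i\<in>{i\<in>I. v \<in> E i}. mu i v) \<le> wv v))"

text \<open>Z_n is represented by {0..<n}; the cyclic interval [j, j+l) mod n.\<close>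
definition cyc_interval :: "nat \<Rightarrow> nat \<Rightarrow> nat \<Rightarrow> nat set" where
  "cyc_interval n l j = {(j + t) mod n | t. t < l}"

text \<open>W_n: edges e'_i = union over j in e_i of [j, j+l), indices i < m = length es;
all weights 1.\<close>
definition W_orientable :: "nat \<Rightarrow> nat \<Rightarrow> nat multiset list \<Rightarrow> bool" where
  "W_orientable n l es =
     orientable {0..<n} (\<lambda>_. 1) {..<length es}
       (\<lambda>i. \<Union>j\<in>set_mset (es ! i). cyc_interval n l j) (\<lambda>_. 1)"

text \<open>hat W_n: vertex weights l; ordinary edges Inl i = e_i (i < m) with weight 1;
helper edges Inr i = {i, i+1 mod n} (i < n) with weight l - 1.\<close>
definition What_edge :: "nat \<Rightarrow> nat multiset list \<Rightarrow> nat + nat \<Rightarrow> nat set" where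
  "What_edge n es x = (case x of Inl i \<Rightarrow> set_mset (es ! i) | Inr i \<Rightarrow> {i, (i + 1) mod n})"

definition What_weight :: "nat \<Rightarrow> nat + nat \<Rightarrow> nat" where
  "What_weight l x = (case x of Inl i \<Rightarrow> 1 | Inr i \<Rightarrow> l - 1)"

definition What_orientable :: "nat \<Rightarrow> nat \<Rightarrow> nat multiset list \<Rightarrow> bool" where
  "What_orientable n l es =
     orientable {0..<n} (\<lambda>_. l) (Inl ` {..<length es} \<union> Inr ` {..<n})
       (What_edge n es) (What_weight l)"

end

theory Submission
  imports Defs
begin

text \<open>Both orientability conditions are equivalent to the existence of a carry schedule: a start
j(i) \<in> e(i) for every edge together with carries c(u) \<le> l - 1 across the steps u \<rightarrow> u + 1 of
the cycle such that, of the tokens arriving at a vertex (new starts plus the carry from its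
predecessor), all but at most one are carried on.

In the weighted hypergraph the helper edge {u, u + 1} of weight l - 1 is exactly the carry
channel: it sends c(u) to u + 1 and the remaining l - 1 - c(u) to u, so a vertex has room for one
more unit. In W(n) an orientation is a system of distinct representatives f(i) \<in> e'(i). Writing
f(i) = j(i) + t(i) with t(i) < l, the carry c(u) counts the paths j(i) \<rightarrow> f(i) that cross
u \<rightarrow> u + 1; distinctness bounds it by l - 1. Conversely, a carry schedule verifies Hall's
condition for the intervals [j(i), j(i) + l): summing the balance inequalities around the cycle,
after truncating each carry by how far the intervals covering u still extend, bounds the number
of starts by the number of covered vertices.\<close>

lemma add_mod_cancel_left:
  fixes a s s' n :: nat
  assumes "s < n" "s' < n" "(a + s) mod n = (a + s') mod n"
  shows "s = s'"
proof -
  have key: "s = s'" if "s \<le> s'" "s' < n" "(a + s) mod n = (a + s') mod n" for s s'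
  proof -
    have "n dvd s' - s" using that mod_eq_dvd_iff_nat[of "a + s" "a + s'" n] by simp
    moreover have "s' - s < n" using that by linarith
    ultimately show ?thesis using that(1) by (meson nat_dvd_not_less neq0_conv le_antisym diff_is_0_eq)
  qed
  show ?thesis
  proof (cases "s \<le> s'")
    case True
    then show ?thesis using key assms by blast
  next
    case False
    then show ?thesis using key[of s' s] assms by simp
  qed
qed

lemma bij_betw_add1_mod:
  fixes n :: nat
  assumes "n \<ge> 1"
  shows "bij_betw (\<lambda>u. (u + 1) mod n) {..<n} {..<n}"
proof -
  have "inj_on (\<lambda>u. (u + 1) mod n) {..<n}"
  proof (rule inj_onI)
    fix x y assume "x \<in> {..<n}" "y \<in> {..<n}" "(x + 1) mod n = (y + 1) mod n"
    then show "x = y" using add_mod_cancel_left[of x n y 1] by (simp add: add.commute)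
  qed
  moreover have "(\<lambda>u. (u + 1) mod n) ` {..<n} \<subseteq> {..<n}" using assms by auto
  ultimately show ?thesis unfolding bij_betw_def by (simp add: endo_inj_surj)
qed

lemma add1_mod_eq_add1_mod_iff:
  fixes a u n :: nat
  assumes "u < n"
  shows "(a + 1) mod n = (u + 1) mod n \<longleftrightarrow> a mod n = u"
proof -
  have "(a + 1) mod n = (1 + a mod n) mod n" by (simp add: mod_Suc_eq)
  moreover have "a mod n < n" using assms by simp
  ultimately show ?thesis using add_mod_cancel_left[of "a mod n" n u 1] assms
    by (metis add.commute)
qed

lemma ex_add1_mod_eq:
  fixes v n :: nat
  assumes "n \<ge> 1" and "v < n"
  obtains w where "w < n" and "v = (w + 1) mod n"
proof -
  have "v \<in> (\<lambda>u. (u + 1) mod n) ` {..<n}"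
    using bij_betw_add1_mod[OF assms(1)] assms(2) unfolding bij_betw_def by simp
  then show ?thesis using that by blast
qed

lemma sum_add1_mod_reindex:
  fixes n :: nat
  assumes "n \<ge> 1"
  shows "(\<Sum>u<n. g ((u + 1) mod n)) = (\<Sum>u<n. g u)"
  using sum.reindex_bij_betw[OF bij_betw_add1_mod[OF assms]] .

lemma card_fibre_le_1_if_inj_on:
  assumes "inj_on f I"
  shows "card {i\<in>I. f i = v} \<le> 1"
proof (cases "\<exists>i\<in>I. f i = v")
  case True
  then obtain i where "i \<in> I" "f i = v" by blast
  then have "{i\<in>I. f i = v} = {i}" using assms by (auto simp: inj_on_def)
  then show ?thesis by simp
next
  case False
  then have "{i\<in>I. f i = v} = {}" by blast
  then show ?thesis by (simp del: Collect_empty_eq)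
qed

lemma card_eq_sum_card_fibres:
  assumes "finite S" "\<forall>i\<in>S. j i < (n::nat)"
  shows "card S = (\<Sum>u<n. card {i\<in>S. j i = u})"
proof -
  have "card S = card (\<Union>u<n. {i\<in>S. j i = u})"
    using assms(2) by (intro arg_cong[where f=card]) auto
  also have "\<dots> = (\<Sum>u<n. card {i\<in>S. j i = u})"
    using assms(1) by (intro card_UN_disjoint) auto
  finally show ?thesis .
qed

lemma card_lessThan_Suc_shift:
  "card {s. s < t \<and> Q (Suc s)} + of_bool (Q 0) = card {s. s < t \<and> Q s} + of_bool (Q t)"
proof (induction t)
  case (Suc t)
  have "{s. s < Suc t \<and> P s} = {s. s < t \<and> P s} \<union> (if P t then {t} else {})" for P
    by (auto simp: less_Suc_eq)
  then show ?case using Suc by simp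
qed simp

lemma hall_condition_Diff_tight:
  assumes "finite I"
    and hall: "\<forall>T\<subseteq>I. card T \<le> card (\<Union>(A ` T))"
    and "S \<subseteq> I" and tight: "card (\<Union>(A ` S)) \<le> card S"
  shows "\<forall>T\<subseteq>I - S. card T \<le> card (\<Union>i\<in>T. A i - \<Union>(A ` S))"
proof (intro allI impI)
  fix T assume T: "T \<subseteq> I - S"
  have "finite S" "finite T" using T assms(1,3) by (auto intro: finite_subset)
  moreover have "T \<inter> S = {}" using T by blast
  ultimately have "card T + card S = card (T \<union> S)" by (simp add: card_Un_disjoint)
  also have "\<dots> \<le> card (\<Union>(A ` (T \<union> S)))"
    using hall T \<open>S \<subseteq> I\<close> by (meson Diff_subset Un_least subset_trans)
  also have "\<Union>(A ` (T \<union> S)) = (\<Union>i\<in>T. A i - \<Union>(A ` S)) \<union> \<Union>(A ` S)" by blast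
  also have "card \<dots> \<le> card (\<Union>i\<in>T. A i - \<Union>(A ` S)) + card (\<Union>(A ` S))" by (rule card_Un_le)
  finally show "card T \<le> card (\<Union>i\<in>T. A i - \<Union>(A ` S))" using tight by linarith
qed

lemma hall_condition_Diff_slack:
  assumes "finite I" and "\<forall>i\<in>I. finite (A i)"
    and slack: "\<forall>T. T \<subseteq> I \<and> T \<noteq> {} \<and> T \<noteq> I \<longrightarrow> card T < card (\<Union>(A ` T))"
    and "i\<^sub>0 \<in> I"
  shows "\<forall>T\<subseteq>I - {i\<^sub>0}. card T \<le> card (\<Union>i\<in>T. A i - {x})"
proof (intro allI impI)
  fix T assume T: "T \<subseteq> I - {i\<^sub>0}"
  show "card T \<le> card (\<Union>i\<in>T. A i - {x})"
  proof (cases "T = {}")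
    case False
    have "T \<subseteq> I" "T \<noteq> I" using T \<open>i\<^sub>0 \<in> I\<close> by auto
    then have "card T < card (\<Union>(A ` T))" using slack False by simp
    moreover have "finite (\<Union>(A ` T))"
      using \<open>T \<subseteq> I\<close> assms(1,2) by (meson finite_UN_I finite_subset subsetD)
    then have "card (\<Union>(A ` T)) \<le> card ((\<Union>i\<in>T. A i - {x}) \<union> {x})"
      by (intro card_mono) auto
    moreover have "card ((\<Union>i\<in>T. A i - {x}) \<union> {x}) \<le> card (\<Union>i\<in>T. A i - {x}) + card {x}"
      by (rule card_Un_le)
    ultimately show ?thesis by simp
  qed simp
qed

theorem Hall_marriage:
  assumes "finite I" and "\<forall>i\<in>I. finite (A i)"
    and "\<forall>S\<subseteq>I. card S \<le> card (\<Union>(A ` S))"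
  shows "\<exists>f. (\<forall>i\<in>I. f i \<in> A i) \<and> inj_on f I"
  using assms
proof (induction "card I" arbitrary: I A rule: less_induct)
  case less
  consider (tight) S where "S \<subseteq> I" "S \<noteq> {}" "S \<noteq> I" "card (\<Union>(A ` S)) \<le> card S"
    | (slack) "\<forall>T. T \<subseteq> I \<and> T \<noteq> {} \<and> T \<noteq> I \<longrightarrow> card T < card (\<Union>(A ` T))"
    using not_le by blast
  then show ?case
  proof cases
    case tight
    define X where "X = \<Union>(A ` S)"
    have "S \<subset> I" "I - S \<subset> I" using tight by auto
    then have card_less: "card S < card I" "card (I - S) < card I"
      using less.prems(1) by (auto intro: psubset_card_mono)
    have fin: "finite S" "finite (I - S)" using tight(1) less.prems(1) by (auto intro: finite_subset)
    have "\<forall>i\<in>S. finite (A i)" "\<forall>T\<subseteq>S. card T \<le> card (\<Union>(A ` T))"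
      using less.prems(2,3) tight(1) by auto
    from less.hyps[OF card_less(1) fin(1) this] obtain f
      where f: "\<forall>i\<in>S. f i \<in> A i" "inj_on f S" by blast
    have "\<forall>i\<in>I - S. finite (A i - X)" using less.prems(2) by simp
    from less.hyps[OF card_less(2) fin(2) this
        hall_condition_Diff_tight[OF less.prems(1,3) tight(1,4), folded X_def]]
    obtain g where g: "\<forall>i\<in>I - S. g i \<in> A i - X" "inj_on g (I - S)" by blast
    define h where "h i = (if i \<in> S then f i else g i)" for i
    have "inj_on h S" "inj_on h (I - S)"
      using f(2) g(2) by (simp_all add: h_def inj_on_def)
    moreover have "h ` S \<subseteq> X" "h ` (I - S) \<inter> X = {}"
      using f(1) g(1) by (auto simp: h_def X_def)
    ultimately have "inj_on h (S \<union> (I - S))" unfolding inj_on_Un by blast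
    moreover have "S \<union> (I - S) = I" using tight(1) by blast
    ultimately show ?thesis using f(1) g(1) by (intro exI[of _ h]) (auto simp: h_def)
  next
    case slack
    show ?thesis
    proof (cases "I = {}")
      case False
      then obtain i\<^sub>0 where i\<^sub>0: "i\<^sub>0 \<in> I" by blast
      then have "card {i\<^sub>0} \<le> card (A i\<^sub>0)" using less.prems(3)[rule_format, of "{i\<^sub>0}"] by simp
      then obtain x where x: "x \<in> A i\<^sub>0" by fastforce
      have smaller: "card (I - {i\<^sub>0}) < card I" using less.prems(1) i\<^sub>0 by (rule card_Diff1_less)
      have fin: "finite (I - {i\<^sub>0})" "\<forall>i\<in>I - {i\<^sub>0}. finite (A i - {x})"
        using less.prems(1,2) by auto
      from less.hyps[OF smaller fin hall_condition_Diff_slack[OF less.prems(1,2) slack i\<^sub>0]]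
      obtain g where g: "\<forall>i\<in>I - {i\<^sub>0}. g i \<in> A i - {x}" "inj_on g (I - {i\<^sub>0})" by blast
      have "inj_on (g(i\<^sub>0 := x)) (insert i\<^sub>0 (I - {i\<^sub>0}))" using g by (auto simp: inj_on_def)
      moreover have "insert i\<^sub>0 (I - {i\<^sub>0}) = I" using i\<^sub>0 by blast
      ultimately show ?thesis using g(1) x by (intro exI[of _ "g(i\<^sub>0 := x)"]) auto
    qed simp
  qed
qed

lemma orientable_unit_iff_inj_choice:
  fixes V :: "'v set" and I :: "'i set"
  assumes "finite I" and "\<forall>i\<in>I. E i \<subseteq> V \<and> finite (E i)"
  shows "orientable V (\<lambda>_. 1) I E (\<lambda>_. 1) \<longleftrightarrow> (\<exists>f. (\<forall>i\<in>I. f i \<in> E i) \<and> inj_on f I)"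
proof
  assume "orientable V (\<lambda>_. 1) I E (\<lambda>_. 1)"
  then obtain \<mu> :: "'i \<Rightarrow> 'v \<Rightarrow> nat" where edge: "\<forall>i\<in>I. (\<Sum>v\<in>E i. \<mu> i v) = 1"
    and vertex: "\<forall>v\<in>V. (\<Sum>i\<in>{i\<in>I. v \<in> E i}. \<mu> i v) \<le> 1"
    unfolding orientable_def by blast
  have "\<forall>i\<in>I. \<exists>v. v \<in> E i \<and> 0 < \<mu> i v"
    using edge by (metis sum.neutral zero_neq_one neq0_conv)
  then obtain f where f: "\<forall>i\<in>I. f i \<in> E i \<and> 0 < \<mu> i (f i)" by metis
  have "inj_on f I"
  proof (rule inj_onI, rule ccontr)
    fix a b assume ab: "a \<in> I" "b \<in> I" "f a = f b" "a \<noteq> b"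
    then have "f a \<in> V" using f assms(2) by blast
    have "\<mu> a (f a) + \<mu> b (f a) = (\<Sum>i\<in>{a, b}. \<mu> i (f a))" using ab by simp
    also have "\<dots> \<le> (\<Sum>i\<in>{i\<in>I. f a \<in> E i}. \<mu> i (f a))"
      using ab f assms(1) by (intro sum_mono2) auto
    also have "\<dots> \<le> 1" using vertex \<open>f a \<in> V\<close> by blast
    moreover have "0 < \<mu> a (f a)" "0 < \<mu> b (f a)" using f ab by auto
    ultimately show False by linarith
  qed
  then show "\<exists>f. (\<forall>i\<in>I. f i \<in> E i) \<and> inj_on f I" using f by blast
next
  assume "\<exists>f. (\<forall>i\<in>I. f i \<in> E i) \<and> inj_on f I"
  then obtain f where f: "\<forall>i\<in>I. f i \<in> E i" "inj_on f I" by blast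
  let ?\<mu> = "\<lambda>i v. of_bool (v = f i) :: nat"
  have "(\<Sum>v\<in>E i. ?\<mu> i v) = 1" if "i \<in> I" for i
    using that f(1) assms(2) by (simp add: sum.delta')
  moreover have "(\<Sum>i\<in>{i\<in>I. v \<in> E i}. ?\<mu> i v) \<le> 1" for v
  proof -
    have "(\<Sum>i\<in>{i\<in>I. v \<in> E i}. ?\<mu> i v) = card ({i\<in>I. v \<in> E i} \<inter> {i. v = f i})"
      using assms(1) by simp
    also have "{i\<in>I. v \<in> E i} \<inter> {i. v = f i} = {i\<in>I. f i = v}" using f(1) by auto
    finally show ?thesis using card_fibre_le_1_if_inj_on[OF f(2)] by simp
  qed
  ultimately show "orientable V (\<lambda>_. 1) I E (\<lambda>_. 1)"
    unfolding orientable_def by (intro exI[of _ ?\<mu>]) simp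
qed

lemma mem_cyc_interval: "t < l \<Longrightarrow> (j + t) mod n \<in> cyc_interval n l j"
  unfolding cyc_interval_def by blast

lemma start_mem_cyc_interval: "j < n \<Longrightarrow> l \<ge> 1 \<Longrightarrow> j \<in> cyc_interval n l j"
  using mem_cyc_interval[of 0 l j n] by simp

lemma cyc_interval_subset: "n \<ge> 1 \<Longrightarrow> cyc_interval n l j \<subseteq> {..<n}"
  unfolding cyc_interval_def by auto

lemma cyc_interval_memE:
  assumes "x \<in> cyc_interval n l j" and "n \<ge> 1"
  obtains t where "t < l" "t < n" "x = (j + t) mod n"
proof -
  obtain t where "t < l" "x = (j + t) mod n" using assms(1) unfolding cyc_interval_def by blast
  moreover have "(j + t mod n) mod n = (j + t) mod n" by (simp add: mod_add_right_eq)
  ultimately show ?thesis using that[of "t mod n"] assms(2)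
    by (metis le_less_trans mod_less_divisor mod_less_eq_dividend less_one not_le)
qed

text \<open>How many further steps beyond u some interval [j i, j i + l), i \<in> S, covering u still
extends (0 if none covers u).\<close>

definition reach :: "nat \<Rightarrow> nat \<Rightarrow> ('i \<Rightarrow> nat) \<Rightarrow> 'i set \<Rightarrow> nat \<Rightarrow> nat" where
  "reach n l j S u = Max (insert 0 {l - 1 - t | t. t < l \<and> (\<exists>i\<in>S. (j i + t) mod n = u)})"

lemma finite_reach_candidates: "finite {l - 1 - t | t. t < (l::nat) \<and> P t}"
  by (simp add: setcompr_eq_image)

lemma reach_le: "reach n l j S u \<le> l - 1"
  unfolding reach_def by (intro Max.boundedI) (auto simp: finite_reach_candidates)

lemma le_reach:
  assumes "t < l" "i \<in> S" "(j i + t) mod n = u"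
  shows "l - 1 - t \<le> reach n l j S u"
  unfolding reach_def using assms by (intro Max_ge) (auto simp: finite_reach_candidates)

lemma reach_start:
  assumes "i \<in> S" "j i < n" "l \<ge> 1"
  shows "reach n l j S (j i) = l - 1"
  using le_reach[of 0 l i S j n "j i"] reach_le[of n l j S "j i"] assms by simp

lemma reach_step:
  assumes "0 < reach n l j S u"
  shows "(u + 1) mod n \<in> (\<Union>i\<in>S. cyc_interval n l (j i))"
    and "reach n l j S u \<le> reach n l j S ((u + 1) mod n) + 1"
proof -
  have "reach n l j S u \<in> insert 0 {l - 1 - t | t. t < l \<and> (\<exists>i\<in>S. (j i + t) mod n = u)}"
    unfolding reach_def using finite_reach_candidates by (intro Max_in) (simp only: finite_insert, simp)
  then obtain t i where t: "reach n l j S u = l - 1 - t" "i \<in> S" "(j i + t) mod n = u"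
    using assms by auto
  then have "t + 1 < l" using assms by linarith
  have "(j i + (t + 1)) mod n = (u + 1) mod n" using t(3) mod_Suc_eq[of "j i + t" n] by simp
  then show "(u + 1) mod n \<in> (\<Union>i\<in>S. cyc_interval n l (j i))"
    using mem_cyc_interval[OF \<open>t + 1 < l\<close>, of "j i" n] t(2) by auto
  show "reach n l j S u \<le> reach n l j S ((u + 1) mod n) + 1"
    using le_reach[of "t + 1" l i S j n "(u + 1) mod n"] \<open>t + 1 < l\<close> t
      \<open>(j i + (t + 1)) mod n = (u + 1) mod n\<close> by linarith
qed

text \<open>Truncated by the reach, the carry vanishes in front of every vertex outside the union of
the intervals, so summing this inequality around the cycle charges each covered vertex at most
once.\<close>

lemma truncated_carry_balance:
  fixes j :: "'i \<Rightarrow> nat" and c :: "nat \<Rightarrow> nat"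
  assumes n: "n \<ge> 1" and l: "l \<ge> 1" and start: "\<forall>i\<in>S. j i < n"
    and u: "u < n" and v: "v = (u + 1) mod n" and c_le: "c v \<le> l - 1"
    and balance: "card {i\<in>S. j i = v} + c u \<le> c v + 1"
  shows "card {i\<in>S. j i = v} + min (c u) (reach n l j S u)
    \<le> of_bool (v \<in> (\<Union>i\<in>S. cyc_interval n l (j i))) + min (c v) (reach n l j S v)"
proof (cases "\<exists>i\<in>S. j i = v")
  case True
  then obtain i where i: "i \<in> S" "j i = v" by blast
  have "j i \<in> cyc_interval n l (j i)" using start i(1) l by (simp add: start_mem_cyc_interval)
  then have "v \<in> (\<Union>i\<in>S. cyc_interval n l (j i))" using i by blast
  moreover have "v < n" using v n by simp
  then have "reach n l j S v = l - 1" using reach_start[of i S j n l] i l by simp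
  ultimately show ?thesis using balance c_le by simp
next
  case False
  then have "{i\<in>S. j i = v} = {}" by blast
  moreover have "min (c u) (reach n l j S u)
      \<le> of_bool (v \<in> (\<Union>i\<in>S. cyc_interval n l (j i))) + min (c v) (reach n l j S v)"
  proof (cases "reach n l j S u = 0")
    case False
    then show ?thesis using reach_step[of n l j S u] v balance by auto
  qed simp
  ultimately show ?thesis by (simp del: Collect_empty_eq)
qed

lemma card_le_card_Union_cyc_interval:
  fixes j :: "'i \<Rightarrow> nat" and c :: "nat \<Rightarrow> nat"
  assumes n: "n \<ge> 1" and l: "l \<ge> 1" and "finite S" and start: "\<forall>i\<in>S. j i < n"
    and c_le: "\<forall>u<n. c u \<le> l - 1"
    and balance: "\<forall>u<n. card {i\<in>S. j i = (u + 1) mod n} + c u \<le> c ((u + 1) mod n) + 1"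
  shows "card S \<le> card (\<Union>i\<in>S. cyc_interval n l (j i))"
proof -
  define U where "U = (\<Union>i\<in>S. cyc_interval n l (j i))"
  define c' where "c' u = min (c u) (reach n l j S u)" for u
  have "U \<subseteq> {..<n}" using cyc_interval_subset[OF n] unfolding U_def by blast
  then have card_U: "card U = (\<Sum>v<n. of_bool (v \<in> U))" by (simp add: Int_absorb1)
  have "card S + (\<Sum>u<n. c' u) = (\<Sum>u<n. card {i\<in>S. j i = (u + 1) mod n} + c' u)"
    using card_eq_sum_card_fibres[OF assms(3) start]
      sum_add1_mod_reindex[OF n, of "\<lambda>v. card {i\<in>S. j i = v}"]
    by (simp add: sum.distrib)
  also have "\<dots> \<le> (\<Sum>u<n. of_bool ((u + 1) mod n \<in> U) + c' ((u + 1) mod n))"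
    using truncated_carry_balance[OF n l start _ refl] c_le balance n
    unfolding U_def c'_def by (intro sum_mono) simp
  also have "\<dots> = card U + (\<Sum>u<n. c' u)"
    using sum_add1_mod_reindex[OF n, of "\<lambda>v. of_bool (v \<in> U) + c' v"] card_U
    by (simp add: sum.distrib)
  finally show ?thesis unfolding U_def by simp
qed

text \<open>A token of edge i carried across u arrives at (j i + t i) mod n within the next l - 1
vertices, and different edges have different arrival vertices.\<close>

lemma sum_card_carried_le:
  fixes j t :: "'i \<Rightarrow> nat" and n u :: nat
  assumes "finite I" and inj: "inj_on (\<lambda>i. (j i + t i) mod n) I" and t: "\<forall>i\<in>I. t i < l \<and> t i < n"
  shows "(\<Sum>i\<in>I. card {s. s < t i \<and> (j i + s) mod n = u}) \<le> l - 1"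
proof -
  define P where "P = (SIGMA i:I. {s. s < t i \<and> (j i + s) mod n = u})"
  define g :: "'i \<times> nat \<Rightarrow> nat" where "g = (\<lambda>(i, s). (j i + t i) mod n)"
  have "inj_on g P"
  proof (rule inj_onI, clarify)
    fix i s i' s' assume P: "(i, s) \<in> P" "(i', s') \<in> P" and "g (i, s) = g (i', s')"
    then have "i = i'" using inj by (auto simp: P_def g_def inj_on_def)
    moreover have "s < n" "s' < n" "(j i + s) mod n = (j i + s') mod n"
      using P t \<open>i = i'\<close> by (auto simp: P_def)
    ultimately show "i = i' \<and> s = s'" using add_mod_cancel_left by blast
  qed
  moreover have "g ` P \<subseteq> (\<lambda>r. (u + r) mod n) ` {1..<l}"
  proof clarify
    fix i s assume "(i, s) \<in> P"
    then have "i \<in> I" "s < t i" "(j i + s) mod n = u" by (auto simp: P_def)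
    have "g (i, s) = ((j i + s) + (t i - s)) mod n" using \<open>s < t i\<close> by (simp add: g_def)
    also have "\<dots> = (u + (t i - s)) mod n" using \<open>(j i + s) mod n = u\<close> by (metis mod_add_left_eq)
    finally have "g (i, s) = (u + (t i - s)) mod n" .
    moreover have "t i - s \<in> {1..<l}" using t \<open>i \<in> I\<close> \<open>s < t i\<close> by auto
    ultimately show "g (i, s) \<in> (\<lambda>r. (u + r) mod n) ` {1..<l}" by blast
  qed
  ultimately have "card P \<le> card {1..<l}"
    using card_image[of g P] card_mono[of _ "g ` P"] card_image_le[of "{1..<l}" "\<lambda>r. (u + r) mod n"]
    by (metis finite_atLeastLessThan finite_imageI order_trans)
  then show ?thesis using assms(1) by (simp add: P_def)
qed

lemma sum_card_carried_shift:
  fixes j t :: "'i \<Rightarrow> nat" and u n :: nat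
  assumes "finite I" and "u < n" and "\<forall>i\<in>I. j i < n"
  shows "(\<Sum>i\<in>I. card {s. s < t i \<and> (j i + s) mod n = u}) + card {i\<in>I. j i = (u + 1) mod n}
       = (\<Sum>i\<in>I. card {s. s < t i \<and> (j i + s) mod n = (u + 1) mod n})
         + card {i\<in>I. (j i + t i) mod n = (u + 1) mod n}"
proof -
  have "card {s. s < t i \<and> (j i + s) mod n = u} + of_bool (j i = (u + 1) mod n)
      = card {s. s < t i \<and> (j i + s) mod n = (u + 1) mod n} + of_bool ((j i + t i) mod n = (u + 1) mod n)"
    if "i \<in> I" for i
    using card_lessThan_Suc_shift[of "t i" "\<lambda>s. (j i + s) mod n = (u + 1) mod n"]
      add1_mod_eq_add1_mod_iff[OF assms(2)] assms(3) that by simp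
  then have "(\<Sum>i\<in>I. card {s. s < t i \<and> (j i + s) mod n = u} + of_bool (j i = (u + 1) mod n))
      = (\<Sum>i\<in>I. card {s. s < t i \<and> (j i + s) mod n = (u + 1) mod n}
                + of_bool ((j i + t i) mod n = (u + 1) mod n))"
    by (rule sum.cong[OF refl])
  then show ?thesis using assms(1) by (simp add: sum.distrib Int_def)
qed

text \<open>Edge i starts a token at j i \<in> es ! i, c u tokens are carried across u \<rightarrow> u + 1, and
each vertex keeps at most one of the tokens arriving at it.\<close>

definition valid_carry :: "nat \<Rightarrow> nat \<Rightarrow> nat multiset list \<Rightarrow> (nat \<Rightarrow> nat) \<Rightarrow> (nat \<Rightarrow> nat) \<Rightarrow> bool" where
  "valid_carry n l es j c \<longleftrightarrow>
     (\<forall>i<length es. j i \<in># es ! i) \<and>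
     (\<forall>u<n. c u \<le> l - 1 \<and> card {i\<in>{..<length es}. j i = (u + 1) mod n} + c u \<le> c ((u + 1) mod n) + 1)"

lemma W_orientable_iff_inj_choice:
  assumes "n \<ge> 1"
  shows "W_orientable n l es \<longleftrightarrow>
    (\<exists>f. (\<forall>i\<in>{..<length es}. \<exists>j\<in>#es ! i. f i \<in> cyc_interval n l j) \<and> inj_on f {..<length es})"
proof -
  have "(\<Union>j\<in>set_mset (es ! i). cyc_interval n l j) \<subseteq> {0..<n}" for i
    using cyc_interval_subset[OF assms] by (simp add: UN_subset_iff atLeast0LessThan)
  then have edges: "\<forall>i\<in>{..<length es}. (\<Union>j\<in>set_mset (es ! i). cyc_interval n l j) \<subseteq> {0..<n}
      \<and> finite (\<Union>j\<in>set_mset (es ! i). cyc_interval n l j)"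
    by (meson finite_atLeastLessThan finite_subset)
  show ?thesis
    unfolding W_orientable_def orientable_unit_iff_inj_choice[OF finite_lessThan edges] by simp
qed

lemma W_orientable_if_valid_carry:
  assumes n: "n \<ge> 1" and l: "l \<ge> 1" and es: "\<forall>e\<in>set es. \<forall>j\<in>#e. j < n"
    and carry: "valid_carry n l es j c"
  shows "W_orientable n l es"
proof -
  let ?I = "{..<length es}"
  have j: "\<forall>i\<in>?I. j i \<in># es ! i" using carry unfolding valid_carry_def by simp
  then have start: "\<forall>i\<in>?I. j i < n" using es by (meson lessThan_iff nth_mem)
  have c_le: "\<forall>u<n. c u \<le> l - 1"
    and balance: "\<forall>u<n. card {i\<in>?I. j i = (u + 1) mod n} + c u \<le> c ((u + 1) mod n) + 1"
    using carry unfolding valid_carry_def by blast+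
  have hall: "\<forall>S\<subseteq>?I. card S \<le> card (\<Union>i\<in>S. cyc_interval n l (j i))"
  proof (intro allI impI)
    fix S assume S: "S \<subseteq> ?I"
    have "card {i\<in>S. j i = v} \<le> card {i\<in>?I. j i = v}" for v using S by (intro card_mono) auto
    then have "\<forall>u<n. card {i\<in>S. j i = (u + 1) mod n} + c u \<le> c ((u + 1) mod n) + 1"
      using balance by (meson add_le_mono1 order_trans)
    moreover have "finite S" "\<forall>i\<in>S. j i < n" using S start finite_subset by blast+
    ultimately show "card S \<le> card (\<Union>i\<in>S. cyc_interval n l (j i))"
      using card_le_card_Union_cyc_interval[OF n l _ _ c_le] by blast
  qed
  have "\<forall>i\<in>?I. finite (cyc_interval n l (j i))"
    using cyc_interval_subset[OF n] by (meson finite_lessThan finite_subset)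
  from Hall_marriage[OF finite_lessThan this hall]
  obtain f where "\<forall>i\<in>?I. f i \<in> cyc_interval n l (j i)" "inj_on f ?I" by blast
  then show ?thesis unfolding W_orientable_iff_inj_choice[OF n] using j by blast
qed

lemma valid_carry_if_W_orientable:
  assumes n: "n \<ge> 1" and es: "\<forall>e\<in>set es. \<forall>j\<in>#e. j < n" and "W_orientable n l es"
  shows "\<exists>j c. valid_carry n l es j c"
proof -
  let ?I = "{..<length es}"
  obtain f where f: "\<forall>i\<in>?I. \<exists>j\<in>#es ! i. f i \<in> cyc_interval n l j" "inj_on f ?I"
    using assms(3) unfolding W_orientable_iff_inj_choice[OF n] by blast
  have "\<forall>i\<in>?I. \<exists>p. fst p \<in># es ! i \<and> snd p < l \<and> snd p < n \<and> f i = (fst p + snd p) mod n"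
  proof
    fix i assume "i \<in> ?I"
    then obtain j where "j \<in># es ! i" "f i \<in> cyc_interval n l j" using f(1) by blast
    moreover from this(2) obtain t where "t < l" "t < n" "f i = (j + t) mod n"
      using n by (rule cyc_interval_memE)
    ultimately show "\<exists>p. fst p \<in># es ! i \<and> snd p < l \<and> snd p < n \<and> f i = (fst p + snd p) mod n"
      by (intro exI[of _ "(j, t)"]) simp
  qed
  then obtain p where p: "\<forall>i\<in>?I. fst (p i) \<in># es ! i \<and> snd (p i) < l \<and> snd (p i) < n
      \<and> f i = (fst (p i) + snd (p i)) mod n" by (rule bchoice[elim_format]) blast
  define j where "j i = fst (p i)" for i
  define t where "t i = snd (p i)" for i
  have jt: "\<forall>i\<in>?I. j i \<in># es ! i \<and> t i < l \<and> t i < n \<and> f i = (j i + t i) mod n"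
    using p by (simp add: j_def t_def)
  then have j_less: "\<forall>i\<in>?I. j i < n" using es by (meson lessThan_iff nth_mem)
  have inj: "inj_on (\<lambda>i. (j i + t i) mod n) ?I" using f(2) jt by (simp add: inj_on_def)
  define c where "c u = (\<Sum>i\<in>?I. card {s. s < t i \<and> (j i + s) mod n = u})" for u
  have c_le: "c u \<le> l - 1" for u unfolding c_def using inj jt by (intro sum_card_carried_le) auto
  have "card {i\<in>?I. j i = (u + 1) mod n} + c u \<le> c ((u + 1) mod n) + 1" if "u < n" for u
    using sum_card_carried_shift[OF finite_lessThan that j_less, of t]
      card_fibre_le_1_if_inj_on[OF inj, of "(u + 1) mod n"]
    unfolding c_def by linarith
  moreover have "\<forall>i<length es. j i \<in># es ! i" using jt by simp
  ultimately show ?thesis using c_le unfolding valid_carry_def by blast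
qed

abbreviation What_edges :: "nat \<Rightarrow> nat multiset list \<Rightarrow> (nat + nat) set" where
  "What_edges n es \<equiv> Inl ` {..<length es} \<union> Inr ` {..<n}"

lemma sum_le_capacity:
  fixes \<mu> :: "'i \<Rightarrow> 'v \<Rightarrow> nat"
  assumes "finite I" and "\<forall>v\<in>V. (\<Sum>i\<in>{i\<in>I. v \<in> E i}. \<mu> i v) \<le> w v"
    and "v \<in> V" and "B \<subseteq> {i\<in>I. v \<in> E i}"
  shows "(\<Sum>i\<in>B. \<mu> i v) \<le> w v"
proof -
  have "(\<Sum>i\<in>B. \<mu> i v) \<le> (\<Sum>i\<in>{i\<in>I. v \<in> E i}. \<mu> i v)"
    using assms(1,4) by (intro sum_mono2) auto
  then show ?thesis using assms(2,3) by (meson order_trans)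
qed

context
  fixes n l :: nat and es :: "nat multiset list" and \<mu> :: "nat + nat \<Rightarrow> nat \<Rightarrow> nat"
  assumes n: "n \<ge> 1"
    and edge: "\<forall>x\<in>What_edges n es. (\<Sum>v\<in>What_edge n es x. \<mu> x v) = What_weight l x"
    and vertex: "\<forall>v\<in>{0..<n}. (\<Sum>x\<in>{x\<in>What_edges n es. v \<in> What_edge n es x}. \<mu> x v) \<le> l"
begin

lemma ex_What_oriented_starts:
  "\<exists>j. \<forall>i\<in>{..<length es}. j i \<in># es ! i \<and> 0 < \<mu> (Inl i) (j i)"
proof -
  have "\<forall>i\<in>{..<length es}. \<exists>v. v \<in># es ! i \<and> 0 < \<mu> (Inl i) v"
  proof
    fix i assume "i \<in> {..<length es}"
    then have "(\<Sum>v\<in>set_mset (es ! i). \<mu> (Inl i) v) = 1"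
      using edge[rule_format, of "Inl i"] by (simp add: What_edge_def What_weight_def)
    then show "\<exists>v. v \<in># es ! i \<and> 0 < \<mu> (Inl i) v" by (metis sum.neutral zero_neq_one neq0_conv)
  qed
  then show ?thesis by (rule bchoice)
qed

lemma What_helper_edge_sum: "u < n \<Longrightarrow> (\<Sum>v\<in>{u, (u + 1) mod n}. \<mu> (Inr u) v) = l - 1"
  using edge[rule_format, of "Inr u"] by (simp add: What_edge_def What_weight_def)

lemma What_helper_carry_le: "u < n \<Longrightarrow> \<mu> (Inr u) ((u + 1) mod n) \<le> l - 1"
  using member_le_sum[of "(u + 1) mod n" "{u, (u + 1) mod n}" "\<mu> (Inr u)"] What_helper_edge_sum
  by simp

lemma What_helper_stay_ge: "v < n \<Longrightarrow> l - 1 - \<mu> (Inr v) ((v + 1) mod n) \<le> \<mu> (Inr v) v"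
  using What_helper_edge_sum[of v] by (cases "(v + 1) mod n = v") simp_all

lemma What_oriented_starts_balance:
  assumes j: "\<forall>i\<in>{..<length es}. j i \<in># es ! i \<and> 0 < \<mu> (Inl i) (j i)"
    and u: "u < n" and v: "v = (u + 1) mod n"
  shows "card {i\<in>{..<length es}. j i = v} + \<mu> (Inr u) v \<le> \<mu> (Inr v) ((v + 1) mod n) + 1"
proof -
  let ?c = "\<lambda>u. \<mu> (Inr u) ((u + 1) mod n)"
  have "v < n" using v n by simp
  define A :: "(nat + nat) set" where "A = Inl ` {i\<in>{..<length es}. j i = v}"
  define B :: "(nat + nat) set" where "B = {Inr v, Inr u}"
  have "A \<subseteq> {x\<in>What_edges n es. v \<in> What_edge n es x}"
    using j by (auto simp: A_def What_edge_def)
  moreover have "B \<subseteq> {x\<in>What_edges n es. v \<in> What_edge n es x}"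
    using u v \<open>v < n\<close> by (auto simp: B_def What_edge_def)
  ultimately have incident: "A \<union> B \<subseteq> {x\<in>What_edges n es. v \<in> What_edge n es x}" by blast
  have "A \<inter> B = {}" "finite A" "finite B" by (auto simp: A_def B_def)
  then have "sum (\<lambda>x. \<mu> x v) A + sum (\<lambda>x. \<mu> x v) B = sum (\<lambda>x. \<mu> x v) (A \<union> B)"
    by (simp add: sum.union_disjoint)
  also have "\<dots> \<le> l" using sum_le_capacity[OF _ vertex _ incident] \<open>v < n\<close> by simp
  finally have "sum (\<lambda>x. \<mu> x v) A + sum (\<lambda>x. \<mu> x v) B \<le> l" .
  moreover have "card {i\<in>{..<length es}. j i = v} \<le> sum (\<lambda>x. \<mu> x v) A"
    using sum_bounded_below[of A 1 "\<lambda>x. \<mu> x v"] j by (auto simp: A_def card_image Suc_le_eq)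
  moreover have "l - 1 - ?c v + \<mu> (Inr u) v \<le> sum (\<lambda>x. \<mu> x v) B"
  proof (cases "u = v")
    case True
    then show ?thesis using What_helper_edge_sum[OF u] v What_helper_carry_le[OF u] by (simp add: B_def)
  next
    case False
    then show ?thesis using What_helper_stay_ge[OF \<open>v < n\<close>] by (simp add: B_def)
  qed
  ultimately show ?thesis using What_helper_carry_le[OF \<open>v < n\<close>] by linarith
qed

end

lemma valid_carry_if_What_orientable:
  assumes n: "n \<ge> 1" and "What_orientable n l es"
  shows "\<exists>j c. valid_carry n l es j c"
proof -
  obtain \<mu> :: "nat + nat \<Rightarrow> nat \<Rightarrow> nat" where
    edge: "\<forall>x\<in>What_edges n es. (\<Sum>v\<in>What_edge n es x. \<mu> x v) = What_weight l x" and
    vertex: "\<forall>v\<in>{0..<n}. (\<Sum>x\<in>{x\<in>What_edges n es. v \<in> What_edge n es x}. \<mu> x v) \<le> l"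
    using assms(2) unfolding What_orientable_def orientable_def by blast
  obtain j where j: "\<forall>i\<in>{..<length es}. j i \<in># es ! i \<and> 0 < \<mu> (Inl i) (j i)"
    using ex_What_oriented_starts[OF n edge vertex] by blast
  have "valid_carry n l es j (\<lambda>u. \<mu> (Inr u) ((u + 1) mod n))"
    unfolding valid_carry_def
    using j What_helper_carry_le[OF n edge vertex] What_oriented_starts_balance[OF n edge vertex j] by simp
  then show ?thesis by blast
qed

definition carry_orientation :: "nat \<Rightarrow> nat \<Rightarrow> (nat \<Rightarrow> nat) \<Rightarrow> (nat \<Rightarrow> nat) \<Rightarrow> nat + nat \<Rightarrow> nat \<Rightarrow> nat" where
  "carry_orientation n l j c x v = (case x of Inl i \<Rightarrow> of_bool (v = j i)
     | Inr u \<Rightarrow> (if v = (u + 1) mod n then c u else 0) + (if v = u then l - 1 - c u else 0))"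

lemma sum_carry_orientation_helper_edge:
  assumes "c u \<le> l - 1"
  shows "(\<Sum>v\<in>{u, (u + 1) mod n}. carry_orientation n l j c (Inr u) v) = l - 1"
proof -
  have "(\<Sum>v\<in>{u, (u + 1) mod n}. carry_orientation n l j c (Inr u) v)
      = (\<Sum>v\<in>{u, (u + 1) mod n}. if v = (u + 1) mod n then c u else 0)
        + (\<Sum>v\<in>{u, (u + 1) mod n}. if v = u then l - 1 - c u else 0)"
    by (simp add: carry_orientation_def sum.distrib)
  also have "\<dots> = c u + (l - 1 - c u)" by (simp add: sum.delta)
  finally show ?thesis using assms by simp
qed

lemma sum_carry_orientation_helper_edges:
  fixes n w :: nat
  assumes "w < n" and "v = (w + 1) mod n" and "v < n"
  shows "(\<Sum>u<n. carry_orientation n l j c (Inr u) v) = c w + (l - 1 - c v)"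
proof -
  have "(\<Sum>u<n. carry_orientation n l j c (Inr u) v)
      = (\<Sum>u<n. (if u = w then c u else 0) + (if v = u then l - 1 - c u else 0))"
  proof (rule sum.cong)
    fix u assume "u \<in> {..<n}"
    then have "v = (u + 1) mod n \<longleftrightarrow> u = w"
      using add1_mod_eq_add1_mod_iff[of w n u] assms(1,2) by auto
    then show "carry_orientation n l j c (Inr u) v
        = (if u = w then c u else 0) + (if v = u then l - 1 - c u else 0)"
      by (simp add: carry_orientation_def)
  qed simp
  also have "\<dots> = c w + (l - 1 - c v)" using assms(1,3) by (simp add: sum.distrib sum.delta)
  finally show ?thesis .
qed

lemma What_orientable_if_valid_carry:
  assumes n: "n \<ge> 1" and l: "l \<ge> 1" and carry: "valid_carry n l es j c"
  shows "What_orientable n l es"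
proof -
  let ?I = "{..<length es}" and ?\<mu> = "carry_orientation n l j c"
  have j: "\<forall>i<length es. j i \<in># es ! i" and c_le: "\<forall>u<n. c u \<le> l - 1"
    and balance: "\<forall>u<n. card {i\<in>?I. j i = (u + 1) mod n} + c u \<le> c ((u + 1) mod n) + 1"
    using carry unfolding valid_carry_def by blast+
  have "(\<Sum>v\<in>What_edge n es x. ?\<mu> x v) = What_weight l x" if "x \<in> What_edges n es" for x
    using that j c_le sum_carry_orientation_helper_edge
    by (cases x) (auto simp: What_edge_def What_weight_def carry_orientation_def)
  moreover have "(\<Sum>x\<in>{x\<in>What_edges n es. v \<in> What_edge n es x}. ?\<mu> x v) \<le> l" if "v < n" for v
  proof -
    obtain w where w: "w < n" "v = (w + 1) mod n" using ex_add1_mod_eq[OF n \<open>v < n\<close>] .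
    have "(\<Sum>x\<in>{x\<in>What_edges n es. v \<in> What_edge n es x}. ?\<mu> x v) = (\<Sum>x\<in>What_edges n es. ?\<mu> x v)"
      using j by (intro sum.mono_neutral_left)
        (auto simp: carry_orientation_def What_edge_def split: if_splits)
    also have "\<dots> = (\<Sum>x\<in>Inl ` ?I. ?\<mu> x v) + (\<Sum>x\<in>Inr ` {..<n}. ?\<mu> x v)"
      by (rule sum.union_disjoint) auto
    also have "\<dots> = (\<Sum>i\<in>?I. ?\<mu> (Inl i) v) + (\<Sum>u<n. ?\<mu> (Inr u) v)"
      by (simp add: sum.reindex)
    also have "\<dots> = card {i\<in>?I. j i = v} + (c w + (l - 1 - c v))"
      using sum_carry_orientation_helper_edges[OF w \<open>v < n\<close>]
      by (simp add: carry_orientation_def Int_def eq_commute)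
    finally show ?thesis
      using balance[rule_format, OF w(1), folded w(2)] c_le[rule_format, OF \<open>v < n\<close>] l by linarith
  qed
  ultimately show ?thesis unfolding What_orientable_def orientable_def by (intro exI[of _ ?\<mu>]) auto
qed

theorem proposition1:
  fixes k l n :: nat and es :: "nat multiset list"
  assumes "k \<ge> 2" and "l \<ge> 2" and "n \<ge> 1"
    and "\<forall>e\<in>set es. size e = k \<and> (\<forall>j\<in>#e. j < n)"
  shows "W_orientable n l es \<longleftrightarrow> What_orientable n l es"
proof -
  have es: "\<forall>e\<in>set es. \<forall>j\<in>#e. j < n" using assms(4) by blast
  have l: "l \<ge> 1" using assms(2) by simp
  have "W_orientable n l es \<longleftrightarrow> (\<exists>j c. valid_carry n l es j c)"
    using W_orientable_if_valid_carry[OF assms(3) l es] valid_carry_if_W_orientable[OF assms(3) es]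
    by blast
  also have "\<dots> \<longleftrightarrow> What_orientable n l es"
    using What_orientable_if_valid_carry[OF assms(3) l] valid_carry_if_What_orientable[OF assms(3)]
    by blast
  finally show ?thesis .
qed

end
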